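(* Let $(G,+,p)$ be a valued Abelian group. (I) $G$ is of class $\mathcal{O}_0$ if and only if $G$ admits no nonzero bounded group homomorphism into a Banach space. (II) $G$ is of class $\mathcal{O}_\infty$ if and only if $G$ admits an isometric group homomorphism into a Banach space. (III) $G$ is of class $\mathcal{O}_1$ if and only if $G$ admits a nonexpansive group homomorphism with trivial kernel into a Banach space, if and only if $G$ admits a bounded group homomorphism with trivial kernel into a Banach space.
   Context: A value on an Abelian group $G$ is $p\colon G\to[0,\infty)$ with $p(x)=0\iff x=0$, $p(-x)=p(x)$, $p(x+y)\leqslant p(x)+p(y)$. For $x\in G$ let $p_{0*}(x)=\lim_{n\to\infty}p(nx)/n$ (this limit exists). $G$ is of class $\mathcal{O}_0$ if $p_{0*}\equiv0$; of class $\mathcal{O}_\infty$ if $p_{0*}=p$ (equivalently $p(kx)=|k|p(x)$ for all $k\in\mathbb{Z}$, $x\in G$); of class $\mathcal{O}_1$ if $p_{0*}$ is a value (i.e. $p_{0*}(x)=0$ only for $x=0$). A modulus of continuity is a monotone increasing, subadditive $\omega\colon[0,\infty)\to[0,\infty)$ with $\lim_{t\to0^+}\omega(t)=\omega(0)=0$. A group homomorphism $\psi$ from $G$ into a Banach space $E$ is bounded if there is a modulus of continuity $\omega$ with $\|\psi(x)\|\leqslant\omega(p(x))$ for all $x\in G$; it is nonexpansive if $\|\psi(x)\|\leqslant p(x)$ for all $x$; isometric if $\|\psi(x)\|=p(x)$ for all $x$. *)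

theory Defs
  imports "HOL-Analysis.Analysis" "HOL-Probability.Discrete_Topology"
begin

definition is_value :: "('g::ab_group_add \<Rightarrow> real) \<Rightarrow> bool" where
  "is_value p \<longleftrightarrow> (\<forall>x. p x \<ge> 0) \<and> (\<forall>x. p x = 0 \<longleftrightarrow> x = 0) \<and>
     (\<forall>x. p (- x) = p x) \<and> (\<forall>x y. p (x + y) \<le> p x + p y)"

definition gmult :: "nat \<Rightarrow> 'g::ab_group_add \<Rightarrow> 'g" where
  "gmult n x = (\<Sum>i<n. x)"

definition p0star :: "('g::ab_group_add \<Rightarrow> real) \<Rightarrow> 'g \<Rightarrow> real" where
  "p0star p x = lim (\<lambda>n. p (gmult n x) / real n)"

definition class_O0 :: "('g::ab_group_add \<Rightarrow> real) \<Rightarrow> bool" where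
  "class_O0 p \<longleftrightarrow> (\<forall>x. p0star p x = 0)"

definition class_Oinf :: "('g::ab_group_add \<Rightarrow> real) \<Rightarrow> bool" where
  "class_Oinf p \<longleftrightarrow> (\<forall>x. p0star p x = p x)"

definition class_O1 :: "('g::ab_group_add \<Rightarrow> real) \<Rightarrow> bool" where
  "class_O1 p \<longleftrightarrow> is_value (p0star p)"

definition modulus_of_continuity :: "(real \<Rightarrow> real) \<Rightarrow> bool" where
  "modulus_of_continuity \<omega> \<longleftrightarrow>
     (\<forall>t\<ge>0. \<omega> t \<ge> 0) \<and> mono_on {0..} \<omega> \<and>
     (\<forall>s\<ge>0. \<forall>t\<ge>0. \<omega> (s + t) \<le> \<omega> s + \<omega> t) \<and>
     \<omega> 0 = 0 \<and> (\<omega> \<longlongrightarrow> 0) (at_right 0)"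

definition group_hom :: "('g::ab_group_add \<Rightarrow> 'e::ab_group_add) \<Rightarrow> bool" where
  "group_hom \<psi> \<longleftrightarrow> (\<forall>x y. \<psi> (x + y) = \<psi> x + \<psi> y)"

definition bounded_hom :: "('g::ab_group_add \<Rightarrow> real) \<Rightarrow> ('g \<Rightarrow> 'e::real_normed_vector) \<Rightarrow> bool" where
  "bounded_hom p \<psi> \<longleftrightarrow> (\<exists>\<omega>. modulus_of_continuity \<omega> \<and> (\<forall>x. norm (\<psi> x) \<le> \<omega> (p x)))"

definition nonexpansive_hom :: "('g::ab_group_add \<Rightarrow> real) \<Rightarrow> ('g \<Rightarrow> 'e::real_normed_vector) \<Rightarrow> bool" where
  "nonexpansive_hom p \<psi> \<longleftrightarrow> (\<forall>x. norm (\<psi> x) \<le> p x)"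

definition isometric_hom :: "('g::ab_group_add \<Rightarrow> real) \<Rightarrow> ('g \<Rightarrow> 'e::real_normed_vector) \<Rightarrow> bool" where
  "isometric_hom p \<psi> \<longleftrightarrow> (\<forall>x. norm (\<psi> x) = p x)"

definition trivial_kernel :: "('g::ab_group_add \<Rightarrow> 'e::ab_group_add) \<Rightarrow> bool" where
  "trivial_kernel \<psi> \<longleftrightarrow> (\<forall>x. \<psi> x = 0 \<longrightarrow> x = 0)"

text \<open>The concrete Banach space l-infinity(G): bounded real functions on G with the sup norm,
  realised as bounded continuous functions on G with the discrete topology.\<close>
type_synonym 'g linf = "'g discrete \<Rightarrow>\<^sub>C real"

end

theory Submission
  imports Defs
begin

text \<open>By Fekete's lemma the limit p0* exists; it is a nonnegative, symmetric, subadditive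
  function below p that is homogeneous with respect to multiples. A bounded homomorphism \<psi>
  vanishes wherever p0* does: norm (\<psi> (n x)) = n norm (\<psi> x) grows linearly, while p(nx) = o(n)
  and a modulus of continuity grows at most linearly. Conversely, a Hahn-Banach argument for abelian
  groups (by Zorn's lemma every sublinear function dominates a minimal one, and minimal ones are
  additive) yields for every y an additive f \<le> p0* with f y = p0* y. Collecting these functionals,
  x \<mapsto> (y \<mapsto> f_y x) is a homomorphism \<Phi> into l\<infinity>(G) with norm (\<Phi> x) = p0* x, hence
  nonexpansive. Being of class O0, O\<infinity> or O1 then amounts to \<Phi> being zero, isometric or injective.\<close>

lemma gmult_0 [simp]: "gmult 0 x = 0"
  by (simp add: gmult_def)

lemma gmult_Suc: "gmult (Suc n) x = x + gmult n x"
  by (simp add: gmult_def add.commute)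

lemma gmult_zero_right [simp]: "gmult n 0 = 0"
  by (induction n) (simp_all add: gmult_Suc)

lemma gmult_left_distrib: "gmult (m + n) x = gmult m x + gmult n x"
  by (induction m) (simp_all add: gmult_Suc add.assoc)

lemma gmult_right_distrib: "gmult n (x + y) = gmult n x + gmult n y"
  by (induction n) (simp_all add: gmult_Suc algebra_simps)

lemma gmult_minus_right: "gmult n (- x) = - gmult n x"
  by (induction n) (simp_all add: gmult_Suc algebra_simps)

lemma gmult_mult: "gmult (m * n) x = gmult m (gmult n x)"
  by (induction m) (simp_all add: gmult_Suc gmult_left_distrib)

lemma group_hom_zero: "group_hom \<psi> \<Longrightarrow> \<psi> 0 = 0"
  unfolding group_hom_def by (metis add.right_neutral add_left_cancel)

lemma group_hom_minus: "group_hom \<psi> \<Longrightarrow> \<psi> (- x) = - \<psi> x"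
  by (metis add.right_inverse add_eq_0_iff2 group_hom_def group_hom_zero)

lemma group_hom_gmult:
  fixes \<psi> :: "'g::ab_group_add \<Rightarrow> 'e::real_vector"
  assumes "group_hom \<psi>"
  shows "\<psi> (gmult n x) = real n *\<^sub>R \<psi> x"
  using assms by (induction n) (simp_all add: gmult_Suc group_hom_zero group_hom_def algebra_simps)

lemma subadditive_seq_le:
  fixes a :: "nat \<Rightarrow> real"
  assumes sub: "\<And>m n. a (m + n) \<le> a m + a n"
  shows "a (k * m + r) \<le> real k * a m + a r"
proof (induction k)
  case 0
  then show ?case by simp
next
  case (Suc k)
  have "a (Suc k * m + r) = a (m + (k * m + r))"
    by (simp add: algebra_simps)
  also have "\<dots> \<le> a m + a (k * m + r)"
    by (rule sub)
  finally show ?case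
    using Suc by (simp add: algebra_simps)
qed

lemma subadditive_seq_ratio_le:
  fixes a :: "nat \<Rightarrow> real"
  assumes sub: "\<And>m n. a (m + n) \<le> a m + a n" and nonneg: "\<And>n. a n \<ge> 0"
    and "m \<ge> 1" "n \<ge> 1"
  shows "a n / real n \<le> a m / real m + (\<Sum>i<m. a i) / real n"
proof -
  have "a n \<le> real (n div m) * a m + a (n mod m)"
    using subadditive_seq_le[OF sub, of "n div m" m "n mod m"] by simp
  moreover have "a (n mod m) \<le> (\<Sum>i<m. a i)"
    using nonneg \<open>m \<ge> 1\<close> by (intro member_le_sum) auto
  moreover have "real (n div m) * a m \<le> real n * (a m / real m)"
  proof -
    have "real (n div m) * real m \<le> real n"
      by (metis of_nat_le_iff of_nat_mult div_times_less_eq_dividend)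
    then have "(real (n div m) * real m) * (a m / real m) \<le> real n * (a m / real m)"
      using nonneg[of m] by (intro mult_right_mono) auto
    then show ?thesis
      using \<open>m \<ge> 1\<close> by simp
  qed
  ultimately show ?thesis
    using \<open>n \<ge> 1\<close> by (simp add: field_simps)
qed

lemma subadditive_seq_ratio_convergent:
  fixes a :: "nat \<Rightarrow> real"
  assumes sub: "\<And>m n. a (m + n) \<le> a m + a n" and nonneg: "\<And>n. a n \<ge> 0"
  shows "convergent (\<lambda>n. a n / real n)"
proof -
  define L where "L = (INF n\<in>{1..}. a n / real n)"
  have bdd: "bdd_below ((\<lambda>n. a n / real n) ` {1..})"
    using nonneg by (intro bdd_belowI[of _ 0]) auto
  have "(\<lambda>n. a n / real n) \<longlonglongrightarrow> L"
  proof (rule LIMSEQ_I)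
    fix e :: real
    assume "e > 0"
    then obtain m where m: "m \<ge> 1" "a m / real m < L + e / 2"
      using cINF_less_iff[OF _ bdd, of "L + e / 2"] by (auto simp: L_def)
    define S where "S = (\<Sum>i<m. a i)"
    obtain N :: nat where N: "2 * S / e < real N"
      using reals_Archimedean2 by blast
    have "norm (a n / real n - L) < e" if "n \<ge> N + 1" for n
    proof -
      have "real N < real n"
        using that by simp
      then have "2 * S / e < real n"
        using N by linarith
      then have "S / real n < e / 2"
        using \<open>e > 0\<close> that by (simp add: field_simps)
      moreover have "L \<le> a n / real n"
        unfolding L_def using bdd that by (intro cINF_lower) auto
      moreover have "a n / real n \<le> a m / real m + S / real n"
        using subadditive_seq_ratio_le[OF sub nonneg m(1), of n] that by (simp add: S_def)
      ultimately have "\<bar>a n / real n - L\<bar> < e"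
        using m(2) unfolding abs_less_iff by linarith
      then show ?thesis
        by simp
    qed
    then show "\<exists>no. \<forall>n\<ge>no. norm (a n / real n - L) < e"
      by blast
  qed
  then show ?thesis
    by (rule convergentI)
qed

lemma modulus_of_continuityD:
  assumes "modulus_of_continuity \<omega>"
  shows "t \<ge> 0 \<Longrightarrow> \<omega> t \<ge> 0" and "0 \<le> s \<Longrightarrow> s \<le> t \<Longrightarrow> \<omega> s \<le> \<omega> t"
    and "s \<ge> 0 \<Longrightarrow> t \<ge> 0 \<Longrightarrow> \<omega> (s + t) \<le> \<omega> s + \<omega> t"
    and "\<omega> 0 = 0" and "(\<omega> \<longlongrightarrow> 0) (at_right 0)"
  using assms unfolding modulus_of_continuity_def by (auto simp: mono_on_def)

lemma modulus_of_continuity_mult_le: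
  assumes \<omega>: "modulus_of_continuity \<omega>" and "d \<ge> 0"
  shows "\<omega> (real k * d) \<le> real k * \<omega> d"
proof (induction k)
  case 0
  then show ?case
    using modulus_of_continuityD(4)[OF \<omega>] by simp
next
  case (Suc k)
  have "\<omega> (real (Suc k) * d) = \<omega> (d + real k * d)"
    by (simp add: algebra_simps)
  also have "\<dots> \<le> \<omega> d + \<omega> (real k * d)"
    using \<open>d \<ge> 0\<close> by (intro modulus_of_continuityD(3)[OF \<omega>]) auto
  finally show ?case
    using Suc by (simp add: algebra_simps)
qed

lemma modulus_of_continuity_le_linear:
  assumes \<omega>: "modulus_of_continuity \<omega>" and "d > 0" "t \<ge> 0"
  shows "\<omega> t \<le> (t / d + 1) * \<omega> d"
proof -
  define k where "k = nat \<lceil>t / d\<rceil>"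
  have "t / d \<ge> 0"
    using \<open>d > 0\<close> \<open>t \<ge> 0\<close> by simp
  then have k: "real k = of_int \<lceil>t / d\<rceil>"
    unfolding k_def by simp
  have "t / d \<le> real k" "real k \<le> t / d + 1"
    unfolding k using of_int_ceiling_le_add_one[of "t / d"] by simp_all
  then have "t \<le> real k * d"
    using \<open>d > 0\<close> by (simp add: field_simps)
  then have "\<omega> t \<le> \<omega> (real k * d)"
    by (rule modulus_of_continuityD(2)[OF \<omega> \<open>t \<ge> 0\<close>])
  also have "\<dots> \<le> real k * \<omega> d"
    using \<open>d > 0\<close> by (intro modulus_of_continuity_mult_le[OF \<omega>]) simp
  also have "\<dots> \<le> (t / d + 1) * \<omega> d"
    using \<open>d > 0\<close> \<open>real k \<le> t / d + 1\<close> modulus_of_continuityD(1)[OF \<omega>, of d]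
    by (intro mult_right_mono) auto
  finally show ?thesis .
qed

lemma modulus_of_continuity_ident: "modulus_of_continuity (\<lambda>t. t)"
  unfolding modulus_of_continuity_def
  by (auto simp: mono_on_def intro: tendsto_ident_at)

lemma nonexpansive_imp_bounded_hom: "nonexpansive_hom p \<psi> \<Longrightarrow> bounded_hom p \<psi>"
  unfolding nonexpansive_hom_def bounded_hom_def using modulus_of_continuity_ident by blast

definition sublinear :: "('g::ab_group_add \<Rightarrow> real) \<Rightarrow> bool" where
  "sublinear r \<longleftrightarrow> (\<forall>x y. r (x + y) \<le> r x + r y) \<and> (\<forall>n x. r (gmult n x) = real n * r x)"

lemma sublinear_add_le: "sublinear r \<Longrightarrow> r (x + y) \<le> r x + r y"
  by (simp add: sublinear_def)

lemma sublinear_gmult: "sublinear r \<Longrightarrow> r (gmult n x) = real n * r x"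
  by (simp add: sublinear_def)

lemma sublinear_zero: "sublinear r \<Longrightarrow> r 0 = 0"
  using sublinear_gmult[of r 0 0] by simp

lemma sublinear_minus_ge: "sublinear r \<Longrightarrow> - r x \<le> r (- x)"
  using sublinear_add_le[of r x "- x"] sublinear_zero[of r] by simp

definition sublinear_shift :: "('g::ab_group_add \<Rightarrow> real) \<Rightarrow> 'g \<Rightarrow> 'g \<Rightarrow> real" where
  "sublinear_shift r z x = (INF k. r (x + gmult k z) - real k * r z)"

context
  fixes r :: "'g::ab_group_add \<Rightarrow> real"
  assumes r: "sublinear r"
begin

lemma sublinear_shift_le_term: "sublinear_shift r z x \<le> r (x + gmult k z) - real k * r z"
proof -
  have "- r (- x) \<le> r (x + gmult j z) - real j * r z" for j
    using sublinear_add_le[OF r, of "x + gmult j z" "- x"] sublinear_gmult[OF r, of j z] by simp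
  then show ?thesis
    unfolding sublinear_shift_def by (intro cINF_lower bdd_belowI2) auto
qed

lemma le_sublinear_shift:
  "(\<And>k. c \<le> r (x + gmult k z) - real k * r z) \<Longrightarrow> c \<le> sublinear_shift r z x"
  unfolding sublinear_shift_def by (rule cINF_greatest) auto

lemma sublinear_shift_le: "sublinear_shift r z x \<le> r x"
  using sublinear_shift_le_term[of z x 0] by simp

lemma sublinear_shift_minus_le: "sublinear_shift r z (- z) \<le> - r z"
  using sublinear_shift_le_term[of z "- z" 1] sublinear_zero[OF r] by (simp add: gmult_Suc)

lemma sublinear_shift_add_le:
  "sublinear_shift r z (x + y) \<le> sublinear_shift r z x + sublinear_shift r z y"
proof -
  have "sublinear_shift r z (x + y)
      \<le> (r (x + gmult j z) - real j * r z) + (r (y + gmult k z) - real k * r z)" for j k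
  proof -
    have "x + y + gmult (j + k) z = (x + gmult j z) + (y + gmult k z)"
      by (simp add: gmult_left_distrib algebra_simps)
    then have "r (x + y + gmult (j + k) z) \<le> r (x + gmult j z) + r (y + gmult k z)"
      using sublinear_add_le[OF r] by metis
    then show ?thesis
      using sublinear_shift_le_term[of z "x + y" "j + k"] by (simp add: algebra_simps)
  qed
  then have "sublinear_shift r z (x + y) - (r (y + gmult k z) - real k * r z)
      \<le> sublinear_shift r z x" for k
    by (intro le_sublinear_shift) (simp add: algebra_simps)
  then have "sublinear_shift r z (x + y) - sublinear_shift r z x \<le> sublinear_shift r z y"
    by (intro le_sublinear_shift) (simp add: algebra_simps)
  then show ?thesis
    by simp
qed

lemma sublinear_shift_zero: "sublinear_shift r z 0 = 0"
proof (rule antisym)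
  show "sublinear_shift r z 0 \<le> 0"
    using sublinear_shift_le[of z 0] sublinear_zero[OF r] by simp
  show "0 \<le> sublinear_shift r z 0"
    by (rule le_sublinear_shift) (simp add: sublinear_gmult[OF r])
qed

lemma sublinear_shift_gmult_le:
  assumes "n > 0"
  shows "sublinear_shift r z (gmult n x) \<le> real n * sublinear_shift r z x"
proof -
  have "sublinear_shift r z (gmult n x) \<le> real n * (r (x + gmult k z) - real k * r z)" for k
  proof -
    have "gmult n x + gmult (n * k) z = gmult n (x + gmult k z)"
      by (simp only: gmult_right_distrib gmult_mult)
    then show ?thesis
      using sublinear_shift_le_term[of z "gmult n x" "n * k"]
        sublinear_gmult[OF r, of n "x + gmult k z"]
      by (simp add: algebra_simps)
  qed
  then have "sublinear_shift r z (gmult n x) / real n \<le> sublinear_shift r z x"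
    using \<open>n > 0\<close> by (intro le_sublinear_shift) (simp add: divide_le_eq mult.commute)
  then show ?thesis
    using \<open>n > 0\<close> by (simp add: divide_le_eq mult.commute)
qed

lemma sublinear_shift_gmult_ge:
  assumes "n > 0"
  shows "real n * sublinear_shift r z x \<le> sublinear_shift r z (gmult n x)"
proof -
  obtain m where m: "n = Suc m"
    using assms gr0_implies_Suc by blast
  have "real n * (r (x + gmult k z) - real k * r z) \<le> r (gmult n x + gmult k z) - real k * r z"
    for k
  proof -
    have "gmult n (x + gmult k z) = (gmult n x + gmult k z) + gmult (m * k) z"
      by (simp add: m gmult_right_distrib gmult_mult[symmetric] gmult_left_distrib[symmetric]
          algebra_simps)
    then have "real n * r (x + gmult k z) = r ((gmult n x + gmult k z) + gmult (m * k) z)"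
      by (metis sublinear_gmult[OF r])
    also have "\<dots> \<le> r (gmult n x + gmult k z) + r (gmult (m * k) z)"
      by (rule sublinear_add_le[OF r])
    also have "\<dots> = r (gmult n x + gmult k z) + real m * real k * r z"
      by (simp add: sublinear_gmult[OF r])
    finally show ?thesis
      using m by (simp add: algebra_simps)
  qed
  then show ?thesis
    using sublinear_shift_le_term
    by (intro le_sublinear_shift) (meson mult_left_mono of_nat_0_le_iff order_trans)
qed

lemma sublinear_shift_gmult:
  "sublinear_shift r z (gmult n x) = real n * sublinear_shift r z x"
proof (cases "n = 0")
  case True
  then show ?thesis
    using sublinear_shift_zero by simp
next
  case False
  then show ?thesis
    by (intro antisym sublinear_shift_gmult_le sublinear_shift_gmult_ge) simp_all
qed

lemma sublinear_sublinear_shift: "sublinear (sublinear_shift r z)"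
  unfolding sublinear_def using sublinear_shift_add_le sublinear_shift_gmult by blast

end

context
  fixes R :: "('g::ab_group_add \<Rightarrow> real) set" and q :: "'g \<Rightarrow> real"
  assumes nonempty: "R \<noteq> {}" and sub: "\<And>r. r \<in> R \<Longrightarrow> sublinear r"
    and below: "\<And>r. r \<in> R \<Longrightarrow> r \<le> q"
    and chain: "\<And>r s. r \<in> R \<Longrightarrow> s \<in> R \<Longrightarrow> r \<le> s \<or> s \<le> r"
begin

lemma chain_INF_le: "r \<in> R \<Longrightarrow> (INF s\<in>R. s x) \<le> r x"
proof (rule cINF_lower)
  have "- q (- x) \<le> s x" if "s \<in> R" for s
    using sublinear_minus_ge[OF sub[OF that], of "- x"] le_funD[OF below[OF that], of "- x"]
    by simp
  then show "bdd_below ((\<lambda>s. s x) ` R)"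
    by (intro bdd_belowI2)
qed

lemma le_chain_INF: "(\<And>r. r \<in> R \<Longrightarrow> c \<le> r x) \<Longrightarrow> c \<le> (INF r\<in>R. r x)"
  using nonempty by (rule cINF_greatest)

lemma chain_INF_add_le: "(INF r\<in>R. r (x + y)) \<le> (INF r\<in>R. r x) + (INF r\<in>R. r y)"
proof -
  have "(INF r\<in>R. r (x + y)) \<le> r x + s y" if rs: "r \<in> R" "s \<in> R" for r s
  proof -
    obtain t where "t \<in> R" "t \<le> r" "t \<le> s"
      using chain[OF rs] rs by auto
    then have "(INF r\<in>R. r (x + y)) \<le> t x + t y"
      using chain_INF_le sublinear_add_le[OF sub] order_trans by metis
    also have "\<dots> \<le> r x + s y"
      using \<open>t \<le> r\<close> \<open>t \<le> s\<close> by (simp add: add_mono le_funD)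
    finally show ?thesis .
  qed
  then have "(INF r\<in>R. r (x + y)) - s y \<le> (INF r\<in>R. r x)" if "s \<in> R" for s
    using that by (intro le_chain_INF) (simp add: algebra_simps)
  then have "(INF r\<in>R. r (x + y)) - (INF r\<in>R. r x) \<le> (INF r\<in>R. r y)"
    by (intro le_chain_INF) (simp add: algebra_simps)
  then show ?thesis
    by simp
qed

lemma chain_INF_gmult: "(INF r\<in>R. r (gmult n x)) = real n * (INF r\<in>R. r x)"
proof (cases "n = 0")
  case True
  then show ?thesis
    using nonempty by (simp add: sublinear_zero[OF sub])
next
  case False
  then have "real n > 0"
    by simp
  have "(INF r\<in>R. r (gmult n x)) / real n \<le> r x" if "r \<in> R" for r
    using \<open>real n > 0\<close> chain_INF_le[OF that, of "gmult n x"] sublinear_gmult[OF sub[OF that]]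
    by (simp add: divide_le_eq mult.commute)
  then have "(INF r\<in>R. r (gmult n x)) / real n \<le> (INF r\<in>R. r x)"
    by (rule le_chain_INF)
  moreover have "real n * (INF r\<in>R. r x) \<le> (INF r\<in>R. r (gmult n x))"
    using \<open>real n > 0\<close> chain_INF_le
    by (intro le_chain_INF) (simp add: sublinear_gmult[OF sub])
  ultimately show ?thesis
    using \<open>real n > 0\<close> by (simp add: divide_le_eq mult.commute)
qed

lemma sublinear_chain_INF: "sublinear (\<lambda>x. INF r\<in>R. r x)"
  unfolding sublinear_def using chain_INF_add_le chain_INF_gmult by blast

end

lemma exists_minimal_sublinear:
  assumes "sublinear q"
  shows "\<exists>r. sublinear r \<and> r \<le> q \<and> (\<forall>s. sublinear s \<and> s \<le> r \<longrightarrow> s = r)"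
proof -
  define A where "A = {r. sublinear r \<and> r \<le> q}"
  have "\<exists>m\<in>A. \<forall>r\<in>A. r \<le> m \<longrightarrow> r = m"
  proof (rule predicate_Zorn)
    show "partial_order_on A (relation_of (\<lambda>r s. s \<le> r) A)"
      by (rule partial_order_on_relation_ofI) auto
  next
    fix C
    assume C: "C \<in> Chains (relation_of (\<lambda>r s. s \<le> r) A)"
    show "\<exists>u\<in>A. \<forall>r\<in>C. u \<le> r"
    proof (cases "C = {}")
      case True
      then show ?thesis
        using assms by (auto simp: A_def)
    next
      case False
      have "C \<subseteq> A"
        using C by (rule Chains_relation_of)
      then have sub: "\<And>r. r \<in> C \<Longrightarrow> sublinear r" and below: "\<And>r. r \<in> C \<Longrightarrow> r \<le> q"
        by (auto simp: A_def)
      have chain: "r \<le> s \<or> s \<le> r" if "r \<in> C" "s \<in> C" for r s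
        using C that unfolding Chains_def relation_of_def by auto
      define u where "u x = (INF r\<in>C. r x)" for x
      have u_le: "u \<le> r" if "r \<in> C" for r
        using chain_INF_le[OF False sub below chain that] by (simp add: u_def le_fun_def)
      have "sublinear u"
        unfolding u_def using False sub below chain by (rule sublinear_chain_INF)
      moreover obtain r where "r \<in> C"
        using False by blast
      then have "u \<le> q"
        using u_le below order_trans by blast
      ultimately show ?thesis
        using u_le unfolding A_def by blast
    qed
  qed
  then show ?thesis
    unfolding A_def by (auto intro: order_trans)
qed

text \<open>Lowering a minimal r in direction z changes nothing, which forces r (- z) = - r z.\<close>

lemma minimal_sublinear_group_hom:
  assumes r: "sublinear r" and minimal: "\<And>s. sublinear s \<Longrightarrow> s \<le> r \<Longrightarrow> s = r"
  shows "group_hom r"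
proof -
  have minus: "r (- z) = - r z" for z
  proof -
    have "sublinear_shift r z = r"
      using minimal sublinear_sublinear_shift[OF r] sublinear_shift_le[OF r]
      by (simp add: le_fun_def)
    then have "r (- z) \<le> - r z"
      using sublinear_shift_minus_le[OF r, of z] by simp
    then show ?thesis
      using sublinear_minus_ge[OF r, of z] by simp
  qed
  have "r (x + z) = r x + r z" for x z
    using sublinear_add_le[OF r, of "x + z" "- z"] sublinear_add_le[OF r, of x z] minus[of z]
    by simp
  then show ?thesis
    by (simp add: group_hom_def)
qed

lemma sublinear_supporting_group_hom:
  assumes q: "sublinear q"
  shows "\<exists>f. group_hom f \<and> f \<le> q \<and> f y = q y"
proof -
  obtain r where r: "sublinear r" "r \<le> sublinear_shift q y"
    and minimal: "\<And>s. sublinear s \<Longrightarrow> s \<le> r \<Longrightarrow> s = r"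
    using exists_minimal_sublinear[OF sublinear_sublinear_shift[OF q]] by blast
  have hom: "group_hom r"
    using r(1) minimal by (rule minimal_sublinear_group_hom)
  have le_q: "r \<le> q"
    using r(2) sublinear_shift_le[OF q] by (auto simp: le_fun_def intro: order_trans)
  have "- r y = r (- y)"
    using group_hom_minus[OF hom] by simp
  also have "\<dots> \<le> - q y"
    using le_funD[OF r(2), of "- y"] sublinear_shift_minus_le[OF q, of y] by simp
  finally have "r y = q y"
    using le_funD[OF le_q, of y] by simp
  then show ?thesis
    using hom le_q by blast
qed

lemma continuous_on_discrete: "continuous_on UNIV (g :: 'a discrete \<Rightarrow> 'b::topological_space)"
  unfolding continuous_on_open_invariant using open_discrete by blast

lemma sublinear_symmetric_linf_embedding:
  fixes q :: "'g::ab_group_add \<Rightarrow> real"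
  assumes q: "sublinear q" and symmetric: "\<And>x. q (- x) = q x"
  shows "\<exists>\<Phi> :: 'g \<Rightarrow> 'g linf. group_hom \<Phi> \<and> (\<forall>x. norm (\<Phi> x) = q x)"
proof -
  obtain F where hom: "\<And>y. group_hom (F y)" and le: "\<And>y. F y \<le> q" and diag: "\<And>y. F y y = q y"
    using sublinear_supporting_group_hom[OF q] by metis
  have abs_le: "\<bar>F y x\<bar> \<le> q x" for y x
    using le_funD[OF le[of y], of x] le_funD[OF le[of y], of "- x"]
      group_hom_minus[OF hom[of y], of x] symmetric[of x]
    by linarith
  define \<Phi> where "\<Phi> x = Bcontfun (\<lambda>d. F (of_discrete d) x)" for x
  have apply_\<Phi>: "apply_bcontfun (\<Phi> x) = (\<lambda>d. F (of_discrete d) x)" for x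
    unfolding \<Phi>_def
    by (intro Bcontfun_inverse bcontfun_normI[OF continuous_on_discrete, where b = "q x"])
      (simp add: abs_le)
  have "group_hom \<Phi>"
    using hom unfolding group_hom_def by (intro allI bcontfun_eqI) (simp add: apply_\<Phi>)
  moreover have "norm (\<Phi> x) = q x" for x
  proof (rule antisym)
    show "norm (\<Phi> x) \<le> q x"
      by (rule norm_bound) (simp add: apply_\<Phi> abs_le)
    have "\<bar>q x\<bar> = norm (apply_bcontfun (\<Phi> x) (discrete x))"
      by (simp add: apply_\<Phi> discrete_inverse diag)
    also have "\<dots> \<le> norm (\<Phi> x)"
      by (rule norm_bounded)
    finally show "q x \<le> norm (\<Phi> x)"
      by linarith
  qed
  ultimately show ?thesis
    by blast
qed

context
  fixes p :: "'g::ab_group_add \<Rightarrow> real"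
  assumes p: "is_value p"
begin

lemma value_nonneg: "p x \<ge> 0" and value_eq_0_iff: "p x = 0 \<longleftrightarrow> x = 0"
  and value_minus: "p (- x) = p x" and value_add_le: "p (x + y) \<le> p x + p y"
  using p unfolding is_value_def by auto

lemma value_zero [simp]: "p 0 = 0"
  using value_eq_0_iff by simp

lemma value_gmult_le: "p (gmult n x) \<le> real n * p x"
proof (induction n)
  case 0
  then show ?case
    by simp
next
  case (Suc n)
  then show ?case
    using value_add_le[of x "gmult n x"] by (simp add: gmult_Suc algebra_simps)
qed

lemma p0star_tendsto: "(\<lambda>n. p (gmult n x) / real n) \<longlonglongrightarrow> p0star p x"
proof -
  have "convergent (\<lambda>n. p (gmult n x) / real n)"
    by (rule subadditive_seq_ratio_convergent)
      (simp_all add: gmult_left_distrib value_add_le value_nonneg)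
  then show ?thesis
    unfolding p0star_def by (simp add: convergent_LIMSEQ_iff)
qed

lemma p0star_le: "p0star p x \<le> p x"
proof (rule LIMSEQ_le_const2[OF p0star_tendsto])
  have "p (gmult n x) / real n \<le> p x" if "n \<ge> 1" for n
    using value_gmult_le[of n x] that by (simp add: field_simps)
  then show "\<exists>N. \<forall>n\<ge>N. p (gmult n x) / real n \<le> p x"
    by blast
qed

lemma p0star_nonneg: "p0star p x \<ge> 0"
  by (rule LIMSEQ_le_const[OF p0star_tendsto]) (simp add: value_nonneg)

lemma p0star_minus: "p0star p (- x) = p0star p x"
  unfolding p0star_def by (simp add: gmult_minus_right value_minus)

lemma p0star_add_le: "p0star p (x + y) \<le> p0star p x + p0star p y"
proof (rule LIMSEQ_le[OF p0star_tendsto tendsto_add[OF p0star_tendsto p0star_tendsto]])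
  show "\<exists>N. \<forall>n\<ge>N.
      p (gmult n (x + y)) / real n \<le> p (gmult n x) / real n + p (gmult n y) / real n"
    by (simp add: gmult_right_distrib add_divide_distrib[symmetric] divide_right_mono value_add_le)
qed

lemma p0star_gmult: "p0star p (gmult k x) = real k * p0star p x"
proof (cases "k = 0")
  case True
  then show ?thesis
    by (simp add: p0star_def)
next
  case False
  then have "strict_mono (\<lambda>n. n * k)"
    by (simp add: strict_mono_def)
  then have "((\<lambda>n. p (gmult n x) / real n) \<circ> (\<lambda>n. n * k)) \<longlonglongrightarrow> p0star p x"
    by (rule LIMSEQ_subseq_LIMSEQ[OF p0star_tendsto])
  then have "(\<lambda>n. real k * (p (gmult (n * k) x) / real (n * k))) \<longlonglongrightarrow> real k * p0star p x"
    unfolding o_def by (rule tendsto_mult_left)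
  also have "(\<lambda>n. real k * (p (gmult (n * k) x) / real (n * k))) = (\<lambda>n. p (gmult n (gmult k x)) / real n)"
    using False by (auto simp: fun_eq_iff gmult_mult mult.commute)
  finally show ?thesis
    using p0star_tendsto LIMSEQ_unique by blast
qed

lemma sublinear_p0star: "sublinear (p0star p)"
  unfolding sublinear_def using p0star_add_le p0star_gmult by blast

lemma p0star_embedding: "\<exists>\<Phi> :: 'g \<Rightarrow> 'g linf. group_hom \<Phi> \<and> (\<forall>x. norm (\<Phi> x) = p0star p x)"
  using sublinear_p0star p0star_minus by (rule sublinear_symmetric_linf_embedding)

text \<open>The homomorphism grows linearly along multiples of x, the value along them sublinearly,
  and a modulus of continuity at most linearly.\<close>

lemma bounded_hom_eq_0_if_p0star_eq_0:
  fixes \<psi> :: "'g \<Rightarrow> 'e::real_normed_vector"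
  assumes hom: "group_hom \<psi>" and bounded: "bounded_hom p \<psi>" and null: "p0star p x = 0"
  shows "\<psi> x = 0"
proof (rule ccontr)
  define c where "c = norm (\<psi> x)"
  assume "\<psi> x \<noteq> 0"
  then have "c > 0"
    by (simp add: c_def)
  obtain \<omega> where \<omega>: "modulus_of_continuity \<omega>" and le_\<omega>: "\<And>y. norm (\<psi> y) \<le> \<omega> (p y)"
    using bounded unfolding bounded_hom_def by blast
  have "\<forall>\<^sub>F t in at_right 0. 0 < t \<and> \<omega> t < c / 2"
    using eventually_conj[OF eventually_at_right_less
        order_tendstoD(2)[OF modulus_of_continuityD(5)[OF \<omega>], of "c / 2"]] \<open>c > 0\<close>
    by simp
  then obtain d where "d > 0" "\<omega> d < c / 2"
    using eventually_happens trivial_limit_at_right_real by blast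
  have "\<forall>\<^sub>F n in sequentially. n \<ge> 1 \<and> p (gmult n x) / real n < d"
    using order_tendstoD(2)[OF p0star_tendsto[of x]] null \<open>d > 0\<close>
    by (auto intro: eventually_conj eventually_ge_at_top)
  then obtain n where "n \<ge> 1" "p (gmult n x) / real n < d"
    using eventually_sequentially by auto
  then have "p (gmult n x) / d < real n"
    using \<open>d > 0\<close> by (simp add: field_simps)
  have "real n * c = norm (\<psi> (gmult n x))"
    by (simp add: c_def group_hom_gmult[OF hom])
  also have "\<dots> \<le> (p (gmult n x) / d + 1) * \<omega> d"
    using le_\<omega> modulus_of_continuity_le_linear[OF \<omega> \<open>d > 0\<close> value_nonneg] order_trans by blast
  also have "\<dots> \<le> (real n + 1) * \<omega> d"
    using \<open>p (gmult n x) / d < real n\<close> modulus_of_continuityD(1)[OF \<omega>, of d] \<open>d > 0\<close>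
    by (intro mult_right_mono) auto
  also have "\<dots> < (real n + 1) * (c / 2)"
    using \<open>\<omega> d < c / 2\<close> by (intro mult_strict_left_mono) auto
  finally show False
    using \<open>n \<ge> 1\<close> \<open>c > 0\<close> by (simp add: field_simps)
qed

lemma class_O0_imp_bounded_hom_eq_0:
  "class_O0 p \<Longrightarrow> group_hom \<psi> \<Longrightarrow> bounded_hom p \<psi> \<Longrightarrow> \<psi> = (\<lambda>_. 0)"
  unfolding class_O0_def using bounded_hom_eq_0_if_p0star_eq_0 by blast

lemma class_O1_iff: "class_O1 p \<longleftrightarrow> (\<forall>x. p0star p x = 0 \<longrightarrow> x = 0)"
  unfolding class_O1_def is_value_def
  using p0star_nonneg p0star_minus p0star_add_le sublinear_zero[OF sublinear_p0star] by auto

lemma class_O1_if_bounded_hom_trivial_kernel: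
  "group_hom \<psi> \<Longrightarrow> bounded_hom p \<psi> \<Longrightarrow> trivial_kernel \<psi> \<Longrightarrow> class_O1 p"
  unfolding class_O1_iff trivial_kernel_def using bounded_hom_eq_0_if_p0star_eq_0 by blast

lemma class_Oinf_if_isometric_hom:
  fixes \<psi> :: "'g \<Rightarrow> 'e::real_normed_vector"
  assumes hom: "group_hom \<psi>" and isometric: "isometric_hom p \<psi>"
  shows "class_Oinf p"
proof -
  have "p (gmult n x) = real n * p x" for n x
  proof -
    have "p (gmult n x) = norm (\<psi> (gmult n x))"
      using isometric by (simp add: isometric_hom_def)
    also have "\<dots> = real n * p x"
      using isometric by (simp add: group_hom_gmult[OF hom] isometric_hom_def)
    finally show ?thesis .
  qed
  then have "\<forall>\<^sub>F n in sequentially. p (gmult n x) / real n = p x" for x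
    by (intro eventually_mono[OF eventually_ge_at_top[of 1]]) simp
  then have "(\<lambda>n. p (gmult n x) / real n) \<longlonglongrightarrow> p x" for x
    by (rule tendsto_eventually)
  then show ?thesis
    unfolding class_Oinf_def using p0star_tendsto LIMSEQ_unique by blast
qed

end

theorem theorem2p10:
  fixes p :: "'g::ab_group_add \<Rightarrow> real"
  assumes "is_value p"
  shows
    \<comment> \<open>(I)\<close>
    "(class_O0 p \<longleftrightarrow> \<not> (\<exists>\<psi> :: 'g \<Rightarrow> 'g linf. group_hom \<psi> \<and> bounded_hom p \<psi> \<and> \<psi> \<noteq> (\<lambda>_. 0)))
     \<and> (class_O0 p \<longrightarrow> (\<forall>\<psi> :: 'g \<Rightarrow> 'b::banach. group_hom \<psi> \<and> bounded_hom p \<psi> \<longrightarrow> \<psi> = (\<lambda>_. 0)))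
     \<and> \<comment> \<open>(II)\<close>
     (class_Oinf p \<longleftrightarrow> (\<exists>\<psi> :: 'g \<Rightarrow> 'g linf. group_hom \<psi> \<and> isometric_hom p \<psi>))
     \<and> ((\<exists>\<psi> :: 'g \<Rightarrow> 'b. group_hom \<psi> \<and> isometric_hom p \<psi>) \<longrightarrow> class_Oinf p)
     \<and> \<comment> \<open>(III)\<close>
     (class_O1 p \<longleftrightarrow> (\<exists>\<psi> :: 'g \<Rightarrow> 'g linf. group_hom \<psi> \<and> nonexpansive_hom p \<psi> \<and> trivial_kernel \<psi>))
     \<and> (class_O1 p \<longleftrightarrow> (\<exists>\<psi> :: 'g \<Rightarrow> 'g linf. group_hom \<psi> \<and> bounded_hom p \<psi> \<and> trivial_kernel \<psi>))
     \<and> ((\<exists>\<psi> :: 'g \<Rightarrow> 'b. group_hom \<psi> \<and> nonexpansive_hom p \<psi> \<and> trivial_kernel \<psi>) \<longrightarrow> class_O1 p)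
     \<and> ((\<exists>\<psi> :: 'g \<Rightarrow> 'b. group_hom \<psi> \<and> bounded_hom p \<psi> \<and> trivial_kernel \<psi>) \<longrightarrow> class_O1 p)"
proof -
  obtain \<Phi> :: "'g \<Rightarrow> 'g linf" where hom: "group_hom \<Phi>" and norm: "\<And>x. norm (\<Phi> x) = p0star p x"
    using p0star_embedding[OF assms] by blast
  have nonexpansive: "nonexpansive_hom p \<Phi>"
    unfolding nonexpansive_hom_def using norm p0star_le[OF assms] by simp
  then have bounded: "bounded_hom p \<Phi>"
    by (rule nonexpansive_imp_bounded_hom)
  have "class_O0 p \<longleftrightarrow> \<Phi> = (\<lambda>_. 0)"
    unfolding class_O0_def using norm by (metis norm_eq_zero)
  moreover have "class_Oinf p \<longleftrightarrow> isometric_hom p \<Phi>"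
    unfolding class_Oinf_def isometric_hom_def using norm by simp
  moreover have "class_O1 p \<longleftrightarrow> trivial_kernel \<Phi>"
    unfolding class_O1_iff[OF assms] trivial_kernel_def using norm by (metis norm_eq_zero)
  ultimately show ?thesis
    using hom nonexpansive bounded nonexpansive_imp_bounded_hom
      class_O0_imp_bounded_hom_eq_0[OF assms] class_Oinf_if_isometric_hom[OF assms]
      class_O1_if_bounded_hom_trivial_kernel[OF assms]
    by (intro conjI; blast)
qed

end
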